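(* Let $1\gg \delta \gg n^{-1}$. Every $n$-vertex tree $T$ satisfies at least one of the following: (A) $T$ contains at least $\delta n/800$ vertex-disjoint bare paths, each of length at least $\delta^{-1}$; (B) $T$ contains at least $\delta^6 n$ non-neighbouring leaves; (C) removing from $T$ every leaf whose neighbour is adjacent to at least $\delta^{-4}$ leaves gives a tree with at most $n/100$ vertices.
   Context: A bare path in a tree is a path whose internal vertices all have degree 2 in the tree. A set of leaves is non-neighbouring if no two of them share a neighbour (equivalently, the leaves together with their neighbours span a matching). $a\gg b$ means the statement holds whenever $b\le a^C/C$ for a suitable fixed absolute constant $C$; in particular $n$ is sufficiently large in terms of $\delta$ and $\delta$ is sufficiently small. *)

theory Defs
  imports Complex_Main
begin

definition graph :: "nat set \<Rightarrow> nat set set \<Rightarrow> bool" where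
  "graph V E \<longleftrightarrow> finite V \<and> (\<forall>e\<in>E. card e = 2 \<and> e \<subseteq> V)"

definition adj :: "nat set set \<Rightarrow> nat \<Rightarrow> nat \<Rightarrow> bool" where
  "adj E u v \<longleftrightarrow> {u, v} \<in> E"

definition degree :: "nat set set \<Rightarrow> nat \<Rightarrow> nat" where
  "degree E v = card {u. adj E v u}"

definition is_path :: "nat set set \<Rightarrow> nat list \<Rightarrow> bool" where
  "is_path E xs \<longleftrightarrow> xs \<noteq> [] \<and> distinct xs \<and>
     (\<forall>i. Suc i < length xs \<longrightarrow> adj E (xs ! i) (xs ! Suc i))"

definition path_length :: "nat list \<Rightarrow> nat" where
  "path_length xs = length xs - 1"

definition connected_graph :: "nat set \<Rightarrow> nat set set \<Rightarrow> bool" where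
  "connected_graph V E \<longleftrightarrow>
     (\<forall>u\<in>V. \<forall>v\<in>V. \<exists>xs. is_path E xs \<and> hd xs = u \<and> last xs = v)"

definition acyclic_graph :: "nat set set \<Rightarrow> bool" where
  "acyclic_graph E \<longleftrightarrow>
     \<not> (\<exists>xs. is_path E xs \<and> length xs \<ge> 3 \<and> adj E (last xs) (hd xs))"

definition is_tree :: "nat set \<Rightarrow> nat set set \<Rightarrow> bool" where
  "is_tree V E \<longleftrightarrow> graph V E \<and> V \<noteq> {} \<and> connected_graph V E \<and> acyclic_graph E"

definition bare_path :: "nat set set \<Rightarrow> nat list \<Rightarrow> bool" where
  "bare_path E xs \<longleftrightarrow> is_path E xs \<and>
     (\<forall>i. 0 < i \<and> i + 1 < length xs \<longrightarrow> degree E (xs ! i) = 2)"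

definition is_leaf :: "nat set \<Rightarrow> nat set set \<Rightarrow> nat \<Rightarrow> bool" where
  "is_leaf V E v \<longleftrightarrow> v \<in> V \<and> degree E v = 1"

definition non_neighbouring_leaves :: "nat set \<Rightarrow> nat set set \<Rightarrow> nat set \<Rightarrow> bool" where
  "non_neighbouring_leaves V E L \<longleftrightarrow> (\<forall>l\<in>L. is_leaf V E l) \<and>
     (\<forall>l1\<in>L. \<forall>l2\<in>L. l1 \<noteq> l2 \<longrightarrow> \<not> (\<exists>w. adj E l1 w \<and> adj E l2 w))"

definition heavy_leaves :: "nat set \<Rightarrow> nat set set \<Rightarrow> real \<Rightarrow> nat set" where
  "heavy_leaves V E k = {l. is_leaf V E l \<and>
     (\<exists>w. adj E l w \<and> real (card {u. is_leaf V E u \<and> adj E w u}) \<ge> k)}"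

end

theory Submission
  imports Defs
begin

text \<open>Suppose (B) and (C) fail, and let \<open>p\<close> be the number of leaf parents (vertices adjacent to
  a leaf). One leaf per leaf parent gives non-neighbouring leaves, so \<open>p < \<delta>\<^sup>6 n\<close>. Every vertex
  that is not a heavy leaf is a light leaf, of degree 2, or of degree at least 3, and there are at
  most \<open>p / \<delta>\<^sup>4\<close> light leaves. In the tree obtained by pruning all leaves, every vertex of degree
  at most 1 is a leaf parent; as a forest has average degree below 2, the pruned tree has at most
  \<open>2p\<close> branching vertices of total degree at most \<open>6p\<close>. Hence there are at most \<open>3p\<close> vertices of
  degree at least 3 and at most \<open>10p\<close> edges leaving the set of degree-2 vertices. Greedily cutting
  longest paths through degree-2 vertices into pieces of \<open>M \<approx> 1/\<delta>\<close> vertices covers all of them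
  except at most \<open>M\<close> per such edge, so more than \<open>n/100 - O(\<delta>\<^sup>2 n)\<close> degree-2 vertices yield
  at least \<open>\<delta> n/800\<close> disjoint bare paths.\<close>

lemma adj_commute: "adj E u v \<longleftrightarrow> adj E v u"
  unfolding adj_def by (simp add: insert_commute)

lemma adj_imp_vertices: "graph V E \<Longrightarrow> adj E u v \<Longrightarrow> u \<in> V \<and> v \<in> V"
  unfolding graph_def adj_def by blast

lemma adj_imp_neq: "graph V E \<Longrightarrow> adj E u v \<Longrightarrow> u \<noteq> v"
  unfolding graph_def adj_def by fastforce

lemma graph_edge_doubleton: "graph V E \<Longrightarrow> e \<in> E \<Longrightarrow> \<exists>x y. e = {x, y} \<and> x \<noteq> y"
  unfolding graph_def by (simp add: card_2_iff)

lemma graph_finite_edges: "graph V E \<Longrightarrow> finite E"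
  unfolding graph_def by (meson Pow_iff finite_Pow_iff finite_subset subsetI)

lemma finite_neighbours: "graph V E \<Longrightarrow> finite {u. adj E v u}"
  using adj_imp_vertices by (metis (no_types, lifting) graph_def finite_subset mem_Collect_eq subsetI)

lemma degree_2_neighbours:
  assumes "degree E v = 2" "adj E v a" "adj E v b" "a \<noteq> b" "adj E v c"
  shows "c = a \<or> c = b"
proof -
  have "finite {u. adj E v u}"
    using assms(1) unfolding degree_def by (metis card.infinite zero_neq_numeral)
  moreover have "{a, b} \<subseteq> {u. adj E v u}" "card {a, b} = card {u. adj E v u}"
    using assms unfolding degree_def by auto
  ultimately have "{u. adj E v u} = {a, b}" by (metis card_subset_eq)
  thus ?thesis using assms(5) by blast
qed

lemma degree_2_neighboursE:
  assumes "degree E v = 2"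
  obtains a b where "a \<noteq> b" "adj E v a" "adj E v b"
  using assms unfolding degree_def by (auto simp: card_2_iff)

lemma is_path_rev:
  assumes "is_path E xs" shows "is_path E (rev xs)"
proof -
  have "adj E (rev xs ! i) (rev xs ! Suc i)" if "Suc i < length xs" for i
  proof -
    have "Suc (length xs - Suc (Suc i)) < length xs" using that by simp
    hence "adj E (xs ! (length xs - Suc (Suc i))) (xs ! Suc (length xs - Suc (Suc i)))"
      using assms unfolding is_path_def by blast
    moreover have "Suc (length xs - Suc (Suc i)) = length xs - Suc i" using that by simp
    ultimately show ?thesis using that by (simp add: rev_nth adj_commute)
  qed
  thus ?thesis using assms unfolding is_path_def by simp
qed


lemma is_path_snoc:
  assumes "is_path E xs" "y \<notin> set xs" "adj E (last xs) y"
  shows "is_path E (xs @ [y])"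
proof -
  have "adj E ((xs @ [y]) ! i) ((xs @ [y]) ! Suc i)" if "Suc i < length (xs @ [y])" for i
  proof (cases "Suc i < length xs")
    case True
    thus ?thesis using assms(1) unfolding is_path_def by (simp add: nth_append)
  next
    case False
    hence "i = length xs - 1" "xs \<noteq> []" using that assms(1) by (auto simp: is_path_def)
    thus ?thesis using assms(3) by (simp add: nth_append last_conv_nth)
  qed
  thus ?thesis using assms unfolding is_path_def by auto
qed

lemma is_path_drop: "is_path E xs \<Longrightarrow> i < length xs \<Longrightarrow> is_path E (drop i xs)"
  unfolding is_path_def by (simp add: add.commute add_Suc_right)

lemma is_path_take: "is_path E xs \<Longrightarrow> 0 < m \<Longrightarrow> is_path E (take m xs)"
  unfolding is_path_def by simp

lemma is_path_mono: "is_path E xs \<Longrightarrow> E \<subseteq> E' \<Longrightarrow> is_path E' xs"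
  unfolding is_path_def adj_def by blast

lemma acyclic_graph_mono: "acyclic_graph E' \<Longrightarrow> E \<subseteq> E' \<Longrightarrow> acyclic_graph E"
  unfolding acyclic_graph_def using is_path_mono unfolding adj_def by blast

section \<open>Longest paths in forests\<close>

definition longest_path_in :: "nat set set \<Rightarrow> nat set \<Rightarrow> nat list \<Rightarrow> bool" where
  "longest_path_in E G xs \<longleftrightarrow> is_path E xs \<and> set xs \<subseteq> G \<and>
     (\<forall>ys. is_path E ys \<and> set ys \<subseteq> G \<longrightarrow> length ys \<le> length xs)"

lemma longest_path_in_exists:
  assumes "finite G" "G \<noteq> {}" obtains xs where "longest_path_in E G xs"
proof -
  obtain g where g: "g \<in> G" using assms by auto
  have singleton: "is_path E [g] \<and> set [g] \<subseteq> G" using g by (simp add: is_path_def)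
  have bound: "\<forall>ys. is_path E ys \<and> set ys \<subseteq> G \<longrightarrow> length ys < Suc (card G)"
  proof (intro allI impI)
    fix ys assume ys: "is_path E ys \<and> set ys \<subseteq> G"
    hence "length ys = card (set ys)" by (simp add: is_path_def distinct_card)
    also have "\<dots> \<le> card G" using ys assms(1) by (simp add: card_mono)
    finally show "length ys < Suc (card G)" by simp
  qed
  obtain xs where "is_path E xs \<and> set xs \<subseteq> G"
    "\<forall>ys. is_path E ys \<and> set ys \<subseteq> G \<longrightarrow> length ys \<le> length xs"
    using ex_has_greatest_nat[where f = length, OF singleton bound] by blast
  thus ?thesis using that unfolding longest_path_in_def by blast
qed

lemma longest_path_in_rev: "longest_path_in E G xs \<Longrightarrow> longest_path_in E G (rev xs)"
  unfolding longest_path_in_def using is_path_rev by auto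

text \<open>A longest path cannot be extended, and in a forest its last vertex cannot be adjacent to
  an earlier vertex other than its predecessor without closing a cycle.\<close>
lemma longest_path_in_last_neighbour:
  assumes gr: "graph V E" and ac: "acyclic_graph E" and lp: "longest_path_in E G xs"
    and a: "adj E (last xs) y" and y: "y \<in> G"
  shows "2 \<le> length xs \<and> y = xs ! (length xs - 2)"
proof -
  have p: "is_path E xs" and sG: "set xs \<subseteq> G"
    and mx: "\<And>ys. is_path E ys \<Longrightarrow> set ys \<subseteq> G \<Longrightarrow> length ys \<le> length xs"
    using lp unfolding longest_path_in_def by auto
  have ne: "xs \<noteq> []" using p by (simp add: is_path_def)
  show ?thesis
  proof (cases "y \<in> set xs")
    case False
    have "length (xs @ [y]) \<le> length xs"
      using mx[OF is_path_snoc[OF p False a]] sG y by simp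
    thus ?thesis by simp
  next
    case True
    then obtain i where i: "i < length xs" "xs ! i = y" by (auto simp: in_set_conv_nth)
    have lastn: "last xs = xs ! (length xs - 1)" using ne by (simp add: last_conv_nth)
    have "i \<noteq> length xs - 1" using adj_imp_neq[OF gr a] i lastn by auto
    moreover have "\<not> i < length xs - 2"
    proof
      assume il: "i < length xs - 2"
      have "is_path E (drop i xs)" "length (drop i xs) \<ge> 3"
        "adj E (last (drop i xs)) (hd (drop i xs))"
        using is_path_drop[OF p i(1)] a i il ne by (auto simp: hd_drop_conv_nth)
      thus False using ac unfolding acyclic_graph_def by blast
    qed
    ultimately have "i = length xs - 2" "2 \<le> length xs" using i by auto
    thus ?thesis using i by simp
  qed
qed

lemma longest_path_in_hd_neighbour:
  assumes gr: "graph V E" and ac: "acyclic_graph E" and lp: "longest_path_in E G xs"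
    and a: "adj E (hd xs) y" and y: "y \<in> G"
  shows "2 \<le> length xs \<and> y = xs ! 1"
proof -
  have "xs \<noteq> []" using lp by (simp add: longest_path_in_def is_path_def)
  hence h: "2 \<le> length xs \<and> y = rev xs ! (length xs - 2)"
    using longest_path_in_last_neighbour[OF gr ac longest_path_in_rev[OF lp], of y] a y
    by (simp add: last_rev)
  moreover have "rev xs ! (length xs - 2) = xs ! 1"
    using h[THEN conjunct1] by (simp add: rev_nth Suc_diff_Suc numeral_2_eq_2)
  ultimately show ?thesis by simp
qed

lemma longest_path_in_neighbour:
  assumes gr: "graph V E" and ac: "acyclic_graph E" and lp: "longest_path_in E G xs"
    and deg: "\<forall>g\<in>G. degree E g = 2"
    and i: "i < length xs" and g: "g \<in> G" and a: "adj E (xs ! i) g"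
  shows "(0 < i \<and> g = xs ! (i - 1)) \<or> (i + 1 < length xs \<and> g = xs ! (i + 1))"
proof -
  have p: "is_path E xs" and sG: "set xs \<subseteq> G" using lp unfolding longest_path_in_def by auto
  have ne: "xs \<noteq> []" using p by (simp add: is_path_def)
  consider "i = length xs - 1" | "i = 0" "i \<noteq> length xs - 1" | "0 < i" "i < length xs - 1"
    using i by linarith
  thus ?thesis
  proof cases
    case 1
    hence "last xs = xs ! i" using ne by (simp add: last_conv_nth)
    hence "2 \<le> length xs \<and> g = xs ! (length xs - 2)"
      using longest_path_in_last_neighbour[OF gr ac lp _ g] a by simp
    moreover have "i - 1 = length xs - 2" using 1 by simp
    ultimately show ?thesis using 1 by auto
  next
    case 2
    hence "hd xs = xs ! i" using ne by (simp add: hd_conv_nth)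
    hence "2 \<le> length xs \<and> g = xs ! 1"
      using longest_path_in_hd_neighbour[OF gr ac lp _ g] a by simp
    thus ?thesis using 2 by auto
  next
    case 3
    have d: "degree E (xs ! i) = 2" using deg sG i nth_mem by blast
    have "Suc (i - 1) < length xs" using 3 by arith
    hence "adj E (xs ! (i - 1)) (xs ! Suc (i - 1))" using p unfolding is_path_def by blast
    hence prev: "adj E (xs ! i) (xs ! (i - 1))" using 3 by (simp add: adj_commute)
    have succ: "adj E (xs ! i) (xs ! Suc i)" using p 3 unfolding is_path_def by auto
    have "xs ! (i - 1) \<noteq> xs ! Suc i"
      using p 3 unfolding is_path_def by (simp add: nth_eq_iff_index_eq)
    from degree_2_neighbours[OF d prev succ this a] show ?thesis using 3 by auto
  qed
qed

lemma longest_path_in_hd_exit: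
  assumes gr: "graph V E" and ac: "acyclic_graph E" and lp: "longest_path_in E G xs"
    and deg: "\<forall>g\<in>G. degree E g = 2"
  obtains y where "y \<notin> G" "adj E (hd xs) y"
proof -
  have "hd xs \<in> G" using lp unfolding longest_path_in_def is_path_def by auto
  then obtain a b where ab: "a \<noteq> b" "adj E (hd xs) a" "adj E (hd xs) b"
    using deg degree_2_neighboursE by metis
  have "a \<notin> G \<or> b \<notin> G"
    using ab longest_path_in_hd_neighbour[OF gr ac lp] by blast
  thus ?thesis using that ab by blast
qed

section \<open>Cutting degree-2 vertices into paths\<close>

definition boundary :: "nat set set \<Rightarrow> nat set \<Rightarrow> (nat \<times> nat) set" where
  "boundary E G = {(g, u). g \<in> G \<and> u \<notin> G \<and> adj E g u}"

lemma finite_boundary: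
  assumes "graph V E" shows "finite (boundary E G)"
proof (rule finite_subset)
  show "boundary E G \<subseteq> V \<times> V" using adj_imp_vertices[OF assms] unfolding boundary_def by blast
  show "finite (V \<times> V)" using assms by (simp add: graph_def)
qed

text \<open>Every neighbour in \<open>G\<close> of a vertex of a longest path lies on the path, so cutting off an
  initial segment creates only the boundary pair at the cut.\<close>
lemma boundary_Diff_longest_path_prefix:
  assumes gr: "graph V E" and ac: "acyclic_graph E" and lp: "longest_path_in E G xs"
    and deg: "\<forall>g\<in>G. degree E g = 2"
  shows "boundary E (G - set (take j xs)) \<subseteq>
    {(g, u) \<in> boundary E G. g \<notin> set (take j xs)} \<union>
    (if j < length xs then {(xs ! j, xs ! (j - 1))} else {})"
proof
  fix z assume z: "z \<in> boundary E (G - set (take j xs))"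
  then obtain g u where gu: "z = (g, u)" "g \<in> G" "g \<notin> set (take j xs)" "adj E g u"
    "u \<notin> G - set (take j xs)"
    unfolding boundary_def by auto
  show "z \<in> {(g, u) \<in> boundary E G. g \<notin> set (take j xs)} \<union>
    (if j < length xs then {(xs ! j, xs ! (j - 1))} else {})"
  proof (cases "u \<in> G")
    case False
    thus ?thesis using gu unfolding boundary_def by auto
  next
    case True
    then obtain i where i: "i < j" "i < length xs" "u = xs ! i"
      using gu(5) by (auto simp: in_set_conv_nth)
    have in_prefix: "xs ! k \<in> set (take j xs)" if "k < j" "k < length xs" for k
      using that by (metis in_set_conv_nth length_take min_less_iff_conj nth_take)
    have "adj E (xs ! i) g" using gu(4) i(3) by (simp add: adj_commute)
    from longest_path_in_neighbour[OF gr ac lp deg i(2) gu(2) this] gu(3) i in_prefix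
    have "i + 1 < length xs" "g = xs ! (i + 1)" "\<not> i + 1 < j"
      by (metis less_imp_diff_less less_trans_Suc, auto)
    moreover have "i + 1 = j" using i \<open>\<not> i + 1 < j\<close> by simp
    ultimately have "j < length xs" "z = (xs ! j, xs ! (j - 1))" using gu(1) i by auto
    thus ?thesis by simp
  qed
qed

lemma card_boundary_Diff_longest_path_prefix:
  assumes gr: "graph V E" and ac: "acyclic_graph E" and lp: "longest_path_in E G xs"
    and deg: "\<forall>g\<in>G. degree E g = 2" and j: "0 < j"
  shows "card (boundary E (G - set (take j xs))) + (if j < length xs then 0 else 1)
    \<le> card (boundary E G)"
proof -
  have ne: "xs \<noteq> []" and sG: "set xs \<subseteq> G"
    using lp unfolding longest_path_in_def is_path_def by auto
  obtain y where "y \<notin> G" "adj E (hd xs) y" using longest_path_in_hd_exit[OF gr ac lp deg] .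
  hence hd_exit: "(hd xs, y) \<in> boundary E G" using ne sG unfolding boundary_def by auto
  have finB: "finite (boundary E G)" using finite_boundary[OF gr] .
  define cut where "cut = (if j < length xs then {(xs ! j, xs ! (j - 1))} else {})"
  have "hd xs \<in> set (take j xs)" using j ne by (cases xs; cases j) auto
  hence "boundary E (G - set (take j xs)) \<subseteq> (boundary E G - {(hd xs, y)}) \<union> cut"
    using boundary_Diff_longest_path_prefix[OF gr ac lp deg, of j] unfolding cut_def by auto
  hence "card (boundary E (G - set (take j xs))) \<le> card ((boundary E G - {(hd xs, y)}) \<union> cut)"
    using finB by (intro card_mono) (auto simp: cut_def)
  also have "\<dots> \<le> card (boundary E G - {(hd xs, y)}) + card cut" by (rule card_Un_le)
  finally show ?thesis
    using hd_exit finB card_gt_0_iff[of "boundary E G"]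
    by (auto simp: cut_def card_Diff_singleton split: if_splits)
qed

lemma disjoint_nth_Cons:
  assumes "\<forall>i j. i < length ps \<and> j < length ps \<and> i \<noteq> j \<longrightarrow> set (ps ! i) \<inter> set (ps ! j) = {}"
    and "\<forall>p\<in>set ps. set q \<inter> set p = {}"
  shows "\<forall>i j. i < length (q # ps) \<and> j < length (q # ps) \<and> i \<noteq> j \<longrightarrow>
    set ((q # ps) ! i) \<inter> set ((q # ps) ! j) = {}"
proof (intro allI impI)
  fix i j assume ij: "i < length (q # ps) \<and> j < length (q # ps) \<and> i \<noteq> j"
  show "set ((q # ps) ! i) \<inter> set ((q # ps) ! j) = {}"
    using assms ij by (cases i; cases j) (auto simp: disjoint_iff)
qed

text \<open>Greedy decomposition: repeatedly cut the first \<open>M\<close> vertices off a longest path. Each step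
  either produces a path of \<open>M\<close> vertices without enlarging the boundary, or uses up a whole
  longest path of fewer than \<open>M\<close> vertices and loses the boundary pair at its start.\<close>
lemma disjoint_paths_in_degree_2_set:
  assumes gr: "graph V E" and ac: "acyclic_graph E" and M: "1 \<le> M"
    and GV: "G \<subseteq> V" and deg: "\<forall>g\<in>G. degree E g = 2"
  shows "\<exists>P::nat list list.
     (\<forall>p\<in>set P. is_path E p \<and> length p = M \<and> set p \<subseteq> G) \<and>
     (\<forall>i j. i < length P \<and> j < length P \<and> i \<noteq> j \<longrightarrow> set (P ! i) \<inter> set (P ! j) = {}) \<and>
     card G \<le> length P * M + M * card (boundary E G)"
  using GV deg
proof (induction "card G" arbitrary: G rule: less_induct)
  case less
  have finG: "finite G" using less.prems(1) gr finite_subset unfolding graph_def by blast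
  show ?case
  proof (cases "G = {}")
    case True
    show ?thesis by (rule exI[of _ "[]"]) (simp add: True)
  next
    case False
    obtain xs where lp: "longest_path_in E G xs" using longest_path_in_exists[OF finG False] .
    have p: "is_path E xs" and sG: "set xs \<subseteq> G" using lp unfolding longest_path_in_def by auto
    have ne: "xs \<noteq> []" using p by (simp add: is_path_def)
    define S where "S = set (take M xs)"
    have SG: "S \<subseteq> G" using sG by (auto simp: S_def dest: in_set_takeD)
    have cardS: "card S = min M (length xs)"
      using p by (simp add: S_def is_path_def distinct_card)
    have cardG: "card G = card (G - S) + card S"
      using card_Diff_subset[OF _ SG] card_mono[OF finG SG] finite_subset[OF SG finG] by simp
    have "card (G - S) < card G" using cardG cardS M ne by simp
    then obtain P where P: "\<forall>p\<in>set P. is_path E p \<and> length p = M \<and> set p \<subseteq> G - S"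
      "\<forall>i j. i < length P \<and> j < length P \<and> i \<noteq> j \<longrightarrow> set (P ! i) \<inter> set (P ! j) = {}"
      "card (G - S) \<le> length P * M + M * card (boundary E (G - S))"
      using less.hyps[of "G - S"] less.prems by blast
    have bd: "card (boundary E (G - S)) + (if M < length xs then 0 else 1) \<le> card (boundary E G)"
      using card_boundary_Diff_longest_path_prefix[OF gr ac lp less.prems(2)] M
      unfolding S_def by simp
    show ?thesis
    proof (cases "M \<le> length xs")
      case True
      have q: "is_path E (take M xs) \<and> length (take M xs) = M \<and> set (take M xs) \<subseteq> G"
        using is_path_take[OF p] M True SG by (simp add: S_def)
      have "\<forall>p\<in>set P. set (take M xs) \<inter> set p = {}" using P(1) S_def by auto
      note disjoint = disjoint_nth_Cons[OF P(2) this]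
      have "M * card (boundary E (G - S)) \<le> M * card (boundary E G)"
        using bd by (intro mult_le_mono2) (simp split: if_splits)
      moreover have "length (take M xs # P) * M = length P * M + M" by simp
      ultimately have "card G \<le> length (take M xs # P) * M + M * card (boundary E G)"
        using P(3) cardG cardS True by linarith
      moreover have "\<forall>p\<in>set (take M xs # P). is_path E p \<and> length p = M \<and> set p \<subseteq> G"
        using q P(1) by auto
      ultimately show ?thesis using disjoint by blast
    next
      case False
      have "M * (card (boundary E (G - S)) + 1) \<le> M * card (boundary E G)"
        using bd False by (intro mult_le_mono2) simp
      hence "card G \<le> length P * M + M * card (boundary E G)"
        using P(3) cardG cardS False by (simp add: algebra_simps)
      moreover have "\<forall>p\<in>set P. is_path E p \<and> length p = M \<and> set p \<subseteq> G" using P(1) by auto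
      ultimately show ?thesis using P(2) by blast
    qed
  qed
qed

section \<open>Degrees in forests\<close>

lemma forest_has_vertex_degree_le_1:
  assumes gr: "graph V E" and ac: "acyclic_graph E" and ne: "V \<noteq> {}"
  obtains v where "v \<in> V" "degree E v \<le> 1"
proof -
  have "finite V" using gr by (simp add: graph_def)
  then obtain xs where lp: "longest_path_in E V xs" using longest_path_in_exists ne by blast
  have "last xs \<in> V" using lp unfolding longest_path_in_def is_path_def by auto
  moreover have "{u. adj E (last xs) u} \<subseteq> {xs ! (length xs - 2)}"
    using longest_path_in_last_neighbour[OF gr ac lp] adj_imp_vertices[OF gr] by blast
  hence "degree E (last xs) \<le> card {xs ! (length xs - 2)}"
    unfolding degree_def by (intro card_mono) auto
  hence "degree E (last xs) \<le> 1" by simp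
  ultimately show ?thesis using that by blast
qed

lemma forest_card_edges_le:
  "graph V E \<Longrightarrow> acyclic_graph E \<Longrightarrow> card E \<le> card V"
proof (induction "card V" arbitrary: V E rule: less_induct)
  case less
  have finV: "finite V" using less.prems(1) by (simp add: graph_def)
  have finE: "finite E" using graph_finite_edges[OF less.prems(1)] .
  show ?case
  proof (cases "V = {}")
    case True
    have "E = {}"
    proof (rule ccontr)
      assume "E \<noteq> {}"
      then obtain e where "e \<in> E" by blast
      thus False
        using True graph_edge_doubleton[OF less.prems(1)] less.prems(1) unfolding graph_def by blast
    qed
    thus ?thesis by simp
  next
    case False
    obtain v where v: "v \<in> V" "degree E v \<le> 1"
      using forest_has_vertex_degree_le_1[OF less.prems False] by blast
    define E0 where "E0 = {e \<in> E. v \<notin> e}"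
    have "graph (V - {v}) E0" using less.prems(1) unfolding graph_def E0_def by auto
    moreover have "acyclic_graph E0" using acyclic_graph_mono[OF less.prems(2)] E0_def by auto
    moreover have "card (V - {v}) < card V" using card_Diff1_less[OF finV v(1)] .
    ultimately have IH: "card E0 \<le> card (V - {v})" using less.hyps by blast
    have "E - E0 \<subseteq> (\<lambda>u. {v, u}) ` {u. adj E v u}"
    proof
      fix e assume e: "e \<in> E - E0"
      then obtain x y where xy: "e = {x, y}" using graph_edge_doubleton[OF less.prems(1)] by blast
      have "v \<in> e" "e \<in> E" using e unfolding E0_def by auto
      hence "e = {v, if x = v then y else x}" "e \<in> E" using xy by auto
      thus "e \<in> (\<lambda>u. {v, u}) ` {u. adj E v u}"
        unfolding adj_def by (intro image_eqI[of _ _ "if x = v then y else x"]) auto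
    qed
    hence "card (E - E0) \<le> card ((\<lambda>u. {v, u}) ` {u. adj E v u})"
      using finite_neighbours[OF less.prems(1)] by (intro card_mono) auto
    also have "\<dots> \<le> degree E v" unfolding degree_def by (rule card_image_le) (rule finite_neighbours[OF less.prems(1)])
    finally have "card (E - E0) \<le> 1" using v by simp
    moreover have "E0 \<subseteq> E" unfolding E0_def by blast
    hence "card E = card E0 + card (E - E0)"
      using card_Diff_subset[OF finite_subset[OF _ finE]] card_mono[OF finE] by fastforce
    moreover have "card (V - {v}) + 1 = card V"
      using finV v(1) by (metis Suc_eq_plus1 card_Suc_Diff1)
    ultimately show ?thesis using IH by linarith
  qed
qed

lemma sum_degree_eq_twice_card_edges:
  assumes gr: "graph V E"
  shows "(\<Sum>v\<in>V. degree E v) = 2 * card E"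
proof -
  have finV: "finite V" using gr by (simp add: graph_def)
  have finE: "finite E" using graph_finite_edges[OF gr] .
  have "(\<Sum>v\<in>V. degree E v) = card (SIGMA v:V. {u. adj E v u})"
    unfolding degree_def using finV finite_neighbours[OF gr] by simp
  also have "(SIGMA v:V. {u. adj E v u}) = (\<Union>e\<in>E. {(a, b). {a, b} = e})"
  proof (rule set_eqI)
    fix z :: "nat \<times> nat"
    obtain a b where z: "z = (a, b)" by (cases z)
    have "a \<in> V" if "{a, b} \<in> E" using adj_imp_vertices[OF gr, of a b] that unfolding adj_def by blast
    thus "z \<in> (SIGMA v:V. {u. adj E v u}) \<longleftrightarrow> z \<in> (\<Union>e\<in>E. {(a, b). {a, b} = e})"
      unfolding z adj_def by blast
  qed
  also have "card \<dots> = (\<Sum>e\<in>E. card {(a, b). {a, b} = e})"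
  proof (rule card_UN_disjoint[OF finE])
    show "\<forall>e\<in>E. finite {(a, b). {a, b} = e}"
    proof
      fix e assume "e \<in> E"
      then obtain x y where "e = {x, y}" using graph_edge_doubleton[OF gr] by blast
      hence "{(a, b). {a, b} = e} \<subseteq> e \<times> e" by auto
      thus "finite {(a, b). {a, b} = e}" by (rule finite_subset) (simp add: \<open>e = {x, y}\<close>)
    qed
    show "\<forall>e\<in>E. \<forall>e'\<in>E. e \<noteq> e' \<longrightarrow> {(a, b). {a, b} = e} \<inter> {(a, b). {a, b} = e'} = {}"
      by auto
  qed
  also have "\<dots> = (\<Sum>e\<in>E. 2)"
  proof (rule sum.cong[OF refl])
    fix e assume "e \<in> E"
    then obtain x y where xy: "e = {x, y}" "x \<noteq> y" using graph_edge_doubleton[OF gr] by blast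
    hence "{(a, b). {a, b} = e} = {(x, y), (y, x)}" by (auto simp: doubleton_eq_iff)
    thus "card {(a, b). {a, b} = e} = 2" using xy by simp
  qed
  finally show ?thesis by simp
qed

text \<open>The handshake lemma together with \<open>|E| \<le> |V|\<close>: a forest has average degree below 2, so
  the excess of the branching vertices is paid for by vertices of degree at most 1.\<close>
lemma forest_sum_excess_degree_le:
  assumes gr: "graph V E" and ac: "acyclic_graph E"
  shows "(\<Sum>v\<in>{v\<in>V. 3 \<le> degree E v}. degree E v - 2) \<le> 2 * card {v\<in>V. degree E v \<le> 1}"
proof -
  define L where "L = {v\<in>V. degree E v \<le> 1}"
  define D where "D = {v\<in>V. degree E v = 2}"
  define B where "B = {v\<in>V. 3 \<le> degree E v}"
  have finV: "finite V" using gr by (simp add: graph_def)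
  have split: "sum f V = sum f L + sum f D + sum f B" for f :: "nat \<Rightarrow> nat"
  proof -
    have "V = (L \<union> D) \<union> B" unfolding L_def D_def B_def by auto
    moreover have "L \<inter> D = {}" "(L \<union> D) \<inter> B = {}" unfolding L_def D_def B_def by auto
    moreover have "finite L" "finite D" "finite B" using finV unfolding L_def D_def B_def by auto
    ultimately show ?thesis by (simp only: sum.union_disjoint finite_UnI)
  qed
  have "sum (degree E) B = (\<Sum>v\<in>B. (degree E v - 2) + 2)"
    by (rule sum.cong) (auto simp: B_def)
  also have "\<dots> = (\<Sum>v\<in>B. degree E v - 2) + 2 * card B"
    by (subst sum.distrib) (simp add: mult.commute)
  finally have "sum (degree E) B = (\<Sum>v\<in>B. degree E v - 2) + 2 * card B" .
  moreover have "sum (degree E) D = 2 * card D" unfolding D_def by simp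
  moreover have "sum (degree E) V \<le> 2 * card V"
    using sum_degree_eq_twice_card_edges[OF gr] forest_card_edges_le[OF gr ac] by simp
  moreover have "card V = card L + card D + card B" using split[of "\<lambda>_. 1"] by simp
  ultimately have "(\<Sum>v\<in>B. degree E v - 2) \<le> 2 * card L"
    using split[of "degree E"] by linarith
  thus ?thesis unfolding B_def L_def .
qed

lemma forest_branching_vertices_bound:
  assumes "graph V E" "acyclic_graph E"
  shows "card {v\<in>V. 3 \<le> degree E v} \<le> 2 * card {v\<in>V. degree E v \<le> 1}"
    and "(\<Sum>v\<in>{v\<in>V. 3 \<le> degree E v}. degree E v) \<le> 6 * card {v\<in>V. degree E v \<le> 1}"
proof -
  let ?B = "{v\<in>V. 3 \<le> degree E v}"
  have "(\<Sum>v\<in>?B. 1) \<le> (\<Sum>v\<in>?B. degree E v - 2)" by (rule sum_mono) auto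
  hence "card ?B \<le> (\<Sum>v\<in>?B. degree E v - 2)" by simp
  thus "card ?B \<le> 2 * card {v\<in>V. degree E v \<le> 1}"
    using forest_sum_excess_degree_le[OF assms] by linarith
  have "(\<Sum>v\<in>?B. degree E v) \<le> (\<Sum>v\<in>?B. 3 * (degree E v - 2))"
    by (rule sum_mono) auto
  thus "(\<Sum>v\<in>?B. degree E v) \<le> 6 * card {v\<in>V. degree E v \<le> 1}"
    using forest_sum_excess_degree_le[OF assms] by (simp add: sum_distrib_left[symmetric])
qed

section \<open>Leaves, leaf parents and the pruned tree\<close>

lemma leaf_neighbour_unique:
  assumes "is_leaf V E l" "adj E l a" "adj E l b" shows "a = b"
proof -
  have "card {u. adj E l u} = 1" using assms(1) unfolding is_leaf_def degree_def by simp
  then obtain x where "{u. adj E l u} = {x}" by (rule card_1_singletonE)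
  thus ?thesis using assms(2,3) by (metis mem_Collect_eq singletonD)
qed

lemma leaf_neighbourE:
  assumes "is_leaf V E l" obtains w where "adj E l w"
proof -
  have "card {u. adj E l u} = 1" using assms unfolding is_leaf_def degree_def by simp
  then obtain x where "{u. adj E l u} = {x}" by (rule card_1_singletonE)
  thus ?thesis using that by blast
qed

lemma tree_degree_pos:
  assumes T: "is_tree V E" and two: "2 \<le> card V" and v: "v \<in> V"
  shows "0 < degree E v"
proof -
  have gr: "graph V E" using T by (simp add: is_tree_def)
  have "V \<noteq> {v}" using two by auto
  then obtain u where u: "u \<in> V" "u \<noteq> v" using v by blast
  obtain xs where xs: "is_path E xs" "hd xs = v" "last xs = u"
    using T v u unfolding is_tree_def connected_graph_def by blast
  have "Suc 0 < length xs"
    using xs u by (cases xs) (auto simp: is_path_def)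
  hence "adj E v (xs ! 1)" using xs unfolding is_path_def by (auto simp: hd_conv_nth)
  thus ?thesis unfolding degree_def using finite_neighbours[OF gr] card_gt_0_iff by blast
qed

definition leaf_parents :: "nat set \<Rightarrow> nat set set \<Rightarrow> nat set" where
  "leaf_parents V E = {w. \<exists>l. is_leaf V E l \<and> adj E w l}"

lemma leaf_parents_subset: "graph V E \<Longrightarrow> leaf_parents V E \<subseteq> V"
  using adj_imp_vertices unfolding leaf_parents_def by blast

lemma non_neighbouring_leaves_card_leaf_parents:
  "\<exists>L. non_neighbouring_leaves V E L \<and> card L = card (leaf_parents V E)"
proof -
  define f where "f w = (SOME l. is_leaf V E l \<and> adj E w l)" for w
  have f: "is_leaf V E (f w) \<and> adj E (f w) w" if "w \<in> leaf_parents V E" for w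
    using someI_ex[of "\<lambda>l. is_leaf V E l \<and> adj E w l"] that
    unfolding f_def leaf_parents_def by (simp add: adj_commute)
  have parent: "w = w'" if "w \<in> leaf_parents V E" "adj E (f w) w'" for w w'
    using f[OF that(1)] leaf_neighbour_unique that(2) by blast
  have "inj_on f (leaf_parents V E)"
  proof (rule inj_onI)
    fix w w' assume "w \<in> leaf_parents V E" "w' \<in> leaf_parents V E" "f w = f w'"
    thus "w = w'" using parent f by metis
  qed
  moreover have "non_neighbouring_leaves V E (f ` leaf_parents V E)"
    unfolding non_neighbouring_leaves_def
  proof (intro conjI ballI impI notI)
    fix l assume "l \<in> f ` leaf_parents V E" thus "is_leaf V E l" using f by auto
  next
    fix l l' assume l: "l \<in> f ` leaf_parents V E" "l' \<in> f ` leaf_parents V E" "l \<noteq> l'"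
      and "\<exists>w. adj E l w \<and> adj E l' w"
    then obtain w where "adj E l w" "adj E l' w" by blast
    thus False using l parent by blast
  qed
  ultimately show ?thesis using card_image by blast
qed

lemma card_light_leaves_le:
  assumes gr: "graph V E" and k: "0 \<le> k"
  shows "real (card ({l. is_leaf V E l} - heavy_leaves V E k))
    \<le> real (card (leaf_parents V E)) * k"
proof -
  define NL where "NL w = {u. is_leaf V E u \<and> adj E w u}" for w
  define light where "light = {w \<in> leaf_parents V E. real (card (NL w)) < k}"
  have finV: "finite V" using gr by (simp add: graph_def)
  have "NL w \<subseteq> V" for w unfolding NL_def is_leaf_def by blast
  hence finNL: "finite (NL w)" for w using finV by (rule finite_subset)
  have finP: "finite (leaf_parents V E)"
    using leaf_parents_subset[OF gr] finV by (rule finite_subset)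
  have "{l. is_leaf V E l} - heavy_leaves V E k \<subseteq> (\<Union>w\<in>light. NL w)"
  proof
    fix l assume l: "l \<in> {l. is_leaf V E l} - heavy_leaves V E k"
    then obtain w where w: "adj E l w" using leaf_neighbourE by blast
    have "l \<in> NL w" "w \<in> leaf_parents V E"
      using l w unfolding NL_def leaf_parents_def by (auto simp: adj_commute)
    moreover have "real (card (NL w)) < k"
      using l w unfolding heavy_leaves_def NL_def by auto
    ultimately show "l \<in> (\<Union>w\<in>light. NL w)" unfolding light_def by blast
  qed
  moreover have finL: "finite light" using finP unfolding light_def by simp
  ultimately have "card ({l. is_leaf V E l} - heavy_leaves V E k) \<le> card (\<Union>w\<in>light. NL w)"
    using finNL by (intro card_mono) auto
  also have "\<dots> \<le> (\<Sum>w\<in>light. card (NL w))" by (rule card_UN_le[OF finL])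
  finally have "card ({l. is_leaf V E l} - heavy_leaves V E k) \<le> (\<Sum>w\<in>light. card (NL w))" .
  hence "real (card ({l. is_leaf V E l} - heavy_leaves V E k)) \<le> (\<Sum>w\<in>light. real (card (NL w)))"
    by (metis of_nat_le_iff of_nat_sum)
  also have "\<dots> \<le> (\<Sum>w\<in>light. k)" by (rule sum_mono) (simp add: light_def less_imp_le)
  also have "\<dots> \<le> real (card (leaf_parents V E)) * k"
    using card_mono[OF finP, of light] k by (simp add: light_def mult_right_mono)
  finally show ?thesis .
qed

definition internal_vertices :: "nat set \<Rightarrow> nat set set \<Rightarrow> nat set" where
  "internal_vertices V E = {v \<in> V. \<not> is_leaf V E v}"

definition internal_edges :: "nat set \<Rightarrow> nat set set \<Rightarrow> nat set set" where
  "internal_edges V E = {e \<in> E. e \<subseteq> internal_vertices V E}"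

lemma adj_internal_edges_iff:
  "adj (internal_edges V E) u w \<longleftrightarrow> adj E u w \<and> u \<in> internal_vertices V E \<and> w \<in> internal_vertices V E"
  unfolding adj_def internal_edges_def by auto

lemma graph_internal:
  "graph V E \<Longrightarrow> graph (internal_vertices V E) (internal_edges V E)"
  unfolding graph_def internal_edges_def internal_vertices_def by auto

lemma acyclic_graph_internal_edges:
  "acyclic_graph E \<Longrightarrow> acyclic_graph (internal_edges V E)"
  by (rule acyclic_graph_mono) (auto simp: internal_edges_def)

lemma leaf_parent_if_internal_degree_less:
  assumes gr: "graph V E" and v: "v \<in> internal_vertices V E"
    and less: "degree (internal_edges V E) v < degree E v"
  shows "v \<in> leaf_parents V E"
proof (rule ccontr)
  assume "v \<notin> leaf_parents V E"
  hence "{u. adj E v u} \<subseteq> {u. adj (internal_edges V E) v u}"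
    using v adj_imp_vertices[OF gr]
    unfolding adj_internal_edges_iff leaf_parents_def internal_vertices_def by blast
  hence "degree E v \<le> degree (internal_edges V E) v"
    unfolding degree_def by (intro card_mono finite_neighbours[OF graph_internal[OF gr]])
  thus False using less by simp
qed

lemma tree_internal_degree_le_1_subset:
  assumes T: "is_tree V E" and two: "2 \<le> card V"
  shows "{v \<in> internal_vertices V E. degree (internal_edges V E) v \<le> 1} \<subseteq> leaf_parents V E"
proof
  fix v assume v: "v \<in> {v \<in> internal_vertices V E. degree (internal_edges V E) v \<le> 1}"
  hence "v \<in> V" "\<not> is_leaf V E v" unfolding internal_vertices_def by auto
  hence "1 < degree E v" using tree_degree_pos[OF T two] unfolding is_leaf_def by fastforce
  thus "v \<in> leaf_parents V E"
    using v T leaf_parent_if_internal_degree_less unfolding is_tree_def by fastforce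
qed


lemma tree_internal_branching_bound:
  assumes T: "is_tree V E" and two: "2 \<le> card V"
  defines "B \<equiv> {v \<in> internal_vertices V E. 3 \<le> degree (internal_edges V E) v}"
  shows "card B \<le> 2 * card (leaf_parents V E)"
    and "(\<Sum>v\<in>B. degree (internal_edges V E) v) \<le> 6 * card (leaf_parents V E)"
proof -
  have gr: "graph V E" and ac: "acyclic_graph E" using T by (auto simp: is_tree_def)
  have "card {v \<in> internal_vertices V E. degree (internal_edges V E) v \<le> 1}
      \<le> card (leaf_parents V E)"
    using tree_internal_degree_le_1_subset[OF T two] leaf_parents_subset[OF gr] gr
    by (intro card_mono) (auto simp: graph_def intro: finite_subset)
  thus "card B \<le> 2 * card (leaf_parents V E)"
    "(\<Sum>v\<in>B. degree (internal_edges V E) v) \<le> 6 * card (leaf_parents V E)"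
    using forest_branching_vertices_bound[OF graph_internal[OF gr] acyclic_graph_internal_edges[OF ac]]
    unfolding B_def by linarith+
qed

lemma tree_card_branch_vertices_le:
  assumes T: "is_tree V E" and two: "2 \<le> card V"
  shows "card {v \<in> V. 3 \<le> degree E v} \<le> 3 * card (leaf_parents V E)"
proof -
  have gr: "graph V E" using T by (simp add: is_tree_def)
  have finV: "finite V" using gr by (simp add: graph_def)
  define B where "B = {v \<in> internal_vertices V E. 3 \<le> degree (internal_edges V E) v}"
  have "{v \<in> V. 3 \<le> degree E v} \<subseteq> B \<union> leaf_parents V E"
  proof
    fix v assume v: "v \<in> {v \<in> V. 3 \<le> degree E v}"
    hence "v \<in> internal_vertices V E" unfolding internal_vertices_def is_leaf_def by auto
    thus "v \<in> B \<union> leaf_parents V E"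
      using v leaf_parent_if_internal_degree_less[OF gr] unfolding B_def by fastforce
  qed
  moreover have "finite B" unfolding B_def internal_vertices_def using finV by simp
  moreover have "finite (leaf_parents V E)"
    using leaf_parents_subset[OF gr] finV by (rule finite_subset)
  ultimately have "card {v \<in> V. 3 \<le> degree E v} \<le> card B + card (leaf_parents V E)"
    by (meson card_Un_le card_mono finite_UnI le_trans)
  thus ?thesis using tree_internal_branching_bound(1)[OF T two] unfolding B_def by linarith
qed

lemma tree_sum_internal_degree_branching_le:
  assumes T: "is_tree V E" and two: "2 \<le> card V"
  shows "(\<Sum>u\<in>{u \<in> internal_vertices V E. 3 \<le> degree E u}. degree (internal_edges V E) u)
    \<le> 8 * card (leaf_parents V E)"
proof -
  have gr: "graph V E" using T by (simp add: is_tree_def)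
  have finV: "finite V" using gr by (simp add: graph_def)
  define Par where "Par = leaf_parents V E"
  define E' where "E' = internal_edges V E"
  define B where "B = {u \<in> internal_vertices V E. 3 \<le> degree E' u}"
  define C where "C = {u \<in> Par. degree E' u \<le> 2}"
  have finPar: "finite Par" unfolding Par_def using leaf_parents_subset[OF gr] finV by (rule finite_subset)
  have finB: "finite B" unfolding B_def internal_vertices_def using finV by simp
  have finC: "finite C" unfolding C_def using finPar by simp
  have "{u \<in> internal_vertices V E. 3 \<le> degree E u} \<subseteq> B \<union> C"
    using leaf_parent_if_internal_degree_less[OF gr] unfolding B_def C_def Par_def E'_def by fastforce
  hence "(\<Sum>u\<in>{u \<in> internal_vertices V E. 3 \<le> degree E u}. degree E' u) \<le> (\<Sum>u\<in>B \<union> C. degree E' u)"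
    using finB finC by (intro sum_mono2) auto
  also have "\<dots> \<le> (\<Sum>u\<in>B. degree E' u) + (\<Sum>u\<in>C. degree E' u)"
    by (rule sum_Un_nat[OF finB finC, THEN eq_imp_le, THEN le_trans]) simp
  also have "(\<Sum>u\<in>C. degree E' u) \<le> 2 * card Par"
  proof -
    have "(\<Sum>u\<in>C. degree E' u) \<le> (\<Sum>u\<in>C. 2)" by (rule sum_mono) (simp add: C_def)
    also have "\<dots> \<le> 2 * card Par" using card_mono[OF finPar, of C] by (simp add: C_def)
    finally show ?thesis .
  qed
  finally show ?thesis
    using tree_internal_branching_bound(2)[OF T two] unfolding Par_def B_def E'_def by linarith
qed

text \<open>A boundary pair \<open>(g, u)\<close> of the degree-2 vertices either ends in a leaf, so \<open>g\<close> is a leaf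
  parent, or is an edge of the pruned tree at a vertex \<open>u\<close> of degree at least 3.\<close>
lemma tree_card_boundary_degree_2_le:
  assumes T: "is_tree V E" and two: "2 \<le> card V"
  shows "card (boundary E {v \<in> V. degree E v = 2}) \<le> 10 * card (leaf_parents V E)"
proof -
  have gr: "graph V E" using T by (simp add: is_tree_def)
  have finV: "finite V" using gr by (simp add: graph_def)
  define G where "G = {v \<in> V. degree E v = 2}"
  define Par where "Par = leaf_parents V E"
  define E' where "E' = internal_edges V E"
  define W where "W = {u \<in> internal_vertices V E. 3 \<le> degree E u}"
  define X where "X = (SIGMA g:Par \<inter> G. {u. adj E g u})"
  define Y where "Y u = (\<lambda>g. (g, u)) ` {g. adj E' u g}" for u
  have finPar: "finite Par" unfolding Par_def using leaf_parents_subset[OF gr] finV by (rule finite_subset)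
  have finW: "finite W" unfolding W_def internal_vertices_def using finV by simp
  have finN: "finite {g. adj E' u g}" for u
    unfolding E'_def by (rule finite_neighbours[OF graph_internal[OF gr]])
  have finX: "finite X" unfolding X_def using finPar finite_neighbours[OF gr] by simp
  have "boundary E G \<subseteq> X \<union> (\<Union>u\<in>W. Y u)"
  proof
    fix z assume "z \<in> boundary E G"
    then obtain g u where gu: "z = (g, u)" "g \<in> G" "u \<notin> G" "adj E g u"
      unfolding boundary_def by blast
    show "z \<in> X \<union> (\<Union>u\<in>W. Y u)"
    proof (cases "is_leaf V E u")
      case True
      thus ?thesis using gu unfolding X_def Par_def leaf_parents_def by blast
    next
      case False
      have uV: "u \<in> V" using adj_imp_vertices[OF gr gu(4)] by blast
      hence "3 \<le> degree E u"
        using False gu(3) tree_degree_pos[OF T two] unfolding G_def is_leaf_def by fastforce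
      moreover have "u \<in> internal_vertices V E" using uV False by (simp add: internal_vertices_def)
      moreover have "g \<in> internal_vertices V E"
        using gu(2) unfolding G_def internal_vertices_def is_leaf_def by simp
      ultimately have "adj E' u g" "u \<in> W"
        using gu(4) unfolding E'_def W_def adj_internal_edges_iff by (auto simp: adj_commute)
      thus ?thesis unfolding gu(1) Y_def by blast
    qed
  qed
  hence "card (boundary E G) \<le> card (X \<union> (\<Union>u\<in>W. Y u))"
    using finX finW finN unfolding Y_def by (intro card_mono) auto
  also have "\<dots> \<le> card X + card (\<Union>u\<in>W. Y u)" by (rule card_Un_le)
  also have "card X \<le> 2 * card Par"
  proof -
    have "card X = (\<Sum>g\<in>Par \<inter> G. degree E g)"
      unfolding X_def degree_def using finPar finite_neighbours[OF gr] by simp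
    also have "\<dots> = 2 * card (Par \<inter> G)" by (simp add: G_def)
    also have "\<dots> \<le> 2 * card Par" using card_mono[OF finPar, of "Par \<inter> G"] by simp
    finally show ?thesis .
  qed
  also have "card (\<Union>u\<in>W. Y u) \<le> (\<Sum>u\<in>W. degree E' u)"
  proof -
    have "card (\<Union>u\<in>W. Y u) \<le> (\<Sum>u\<in>W. card (Y u))" by (rule card_UN_le[OF finW])
    also have "\<dots> \<le> (\<Sum>u\<in>W. degree E' u)"
      unfolding Y_def degree_def by (intro sum_mono card_image_le finN)
    finally show ?thesis .
  qed
  finally show ?thesis
    using tree_sum_internal_degree_branching_le[OF T two] unfolding G_def Par_def W_def E'_def
    by linarith
qed

lemma tree_card_not_heavy_le:
  assumes T: "is_tree V E" and two: "2 \<le> card V" and k: "0 \<le> k"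
  shows "real (card (V - heavy_leaves V E k))
    \<le> (k + 3) * real (card (leaf_parents V E)) + real (card {v \<in> V. degree E v = 2})"
proof -
  define L where "L = {l. is_leaf V E l} - heavy_leaves V E k"
  define G where "G = {v \<in> V. degree E v = 2}"
  define B where "B = {v \<in> V. 3 \<le> degree E v}"
  have gr: "graph V E" using T by (simp add: is_tree_def)
  have finV: "finite V" using gr by (simp add: graph_def)
  have "L \<subseteq> V" unfolding L_def is_leaf_def by blast
  hence fin: "finite L" "finite G" "finite B" using finV unfolding G_def B_def by (auto intro: finite_subset)
  have "V - heavy_leaves V E k \<subseteq> L \<union> G \<union> B"
  proof
    fix v assume v: "v \<in> V - heavy_leaves V E k"
    hence "0 < degree E v" using tree_degree_pos[OF T two] by blast
    thus "v \<in> L \<union> G \<union> B" using v unfolding L_def G_def B_def is_leaf_def by auto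
  qed
  hence "card (V - heavy_leaves V E k) \<le> card (L \<union> G \<union> B)"
    using fin by (intro card_mono) auto
  also have "\<dots> \<le> card L + card G + card B"
    by (metis card_Un_le add_le_mono order_refl order_trans)
  finally have "real (card (V - heavy_leaves V E k)) \<le> real (card L) + real (card G) + real (card B)"
    by linarith
  moreover have "real (card L) \<le> real (card (leaf_parents V E)) * k"
    using card_light_leaves_le[OF gr k] unfolding L_def .
  moreover have "card B \<le> 3 * card (leaf_parents V E)"
    using tree_card_branch_vertices_le[OF T two] unfolding B_def .
  ultimately show ?thesis unfolding G_def by (simp add: algebra_simps)
qed

lemma many_paths_arith:
  fixes d n p c M :: real
  assumes d0: "0 < d" and d1: "d \<le> 1 / 100" and c0: "0 \<le> c" and p0: "0 \<le> p"
    and p: "p < d ^ 6 * n" and M0: "0 \<le> M" and M: "M \<le> 1 / d + 2"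
    and total: "n / 100 < p / d ^ 4 + c * M + 10 * p * M + 3 * p"
  shows "d * n / 800 \<le> c"
proof (rule ccontr)
  assume "\<not> d * n / 800 \<le> c"
  hence c: "c < d * n / 800" by simp
  have n0: "0 < n" using p p0 d0 by (smt (verit) zero_less_mult_pos zero_less_power)
  have d2: "d ^ 2 \<le> 1 / 10000"
    using power_mono[OF d1, of 2] d0 by (simp add: power2_eq_square)
  have d5: "d ^ 5 \<le> d ^ 2" and d6: "d ^ 6 \<le> d ^ 2"
    using d0 d1 by (auto intro: power_decreasing)
  have "p / d ^ 4 \<le> d ^ 6 * n / d ^ 4" using p d0 by (simp add: divide_right_mono)
  also have "\<dots> = d ^ 2 * n" using d0 by (simp add: field_simps eval_nat_numeral)
  finally have leaves: "p / d ^ 4 \<le> d ^ 2 * n" .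
  have "M \<le> 3 / d" using M d0 d1 by (simp add: field_simps)
  hence "c * M + 10 * p * M \<le> (3 / d) * (d * n / 800 + 10 * (d ^ 6 * n))"
    using c p c0 p0 M0 d0
    by (smt (verit, best) distrib_right mult_left_mono mult_mono mult.commute)
  also have "\<dots> = 3 * n / 800 + 30 * (d ^ 5 * n)"
    using d0 by (simp add: field_simps eval_nat_numeral)
  finally have paths: "c * M + 10 * p * M \<le> 3 * n / 800 + 30 * (d ^ 5 * n)" .
  have "d ^ 5 * n \<le> n / 10000" "d ^ 6 * n \<le> n / 10000" "d ^ 2 * n \<le> n / 10000"
    using d2 d5 d6 n0 by (auto intro: mult_right_mono order_trans)
  thus False using total leaves paths p n0 by linarith
qed

lemma tree_bare_paths_or_leaves_or_heavy:
  fixes d :: real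
  assumes T: "is_tree V E" and n: "card V = n" and two: "2 \<le> n" and d0: "0 < d" and d1: "d \<le> 1 / 100"
  shows "(\<exists>P::nat list list. real (length P) \<ge> d * real n / 800 \<and>
             (\<forall>p\<in>set P. bare_path E p \<and> real (path_length p) \<ge> 1 / d) \<and>
             (\<forall>i j. i < length P \<and> j < length P \<and> i \<noteq> j \<longrightarrow> set (P ! i) \<inter> set (P ! j) = {}))
       \<or> (\<exists>L. non_neighbouring_leaves V E L \<and> real (card L) \<ge> d ^ 6 * real n)
       \<or> real (card (V - heavy_leaves V E (1 / d ^ 4))) \<le> real n / 100"
    (is "?paths \<or> ?leaves \<or> ?heavy")
proof (rule disjCI)
  assume "\<not> (?leaves \<or> ?heavy)"
  hence notB: "\<not> ?leaves" and notC: "\<not> ?heavy" by auto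
  have gr: "graph V E" and ac: "acyclic_graph E" using T by (auto simp: is_tree_def)
  define p where "p = card (leaf_parents V E)"
  define G where "G = {v \<in> V. degree E v = 2}"
  define M where "M = nat \<lceil>1 / d\<rceil> + 1"
    \<comment> \<open>\<open>M\<close> counts the vertices of a path, \<open>path_length\<close> its edges\<close>
  have p: "real p < d ^ 6 * real n"
    using notB non_neighbouring_leaves_card_leaf_parents[of V E] unfolding p_def by force
  have M1: "1 \<le> M" and GV: "G \<subseteq> V" and Gdeg: "\<forall>g\<in>G. degree E g = 2"
    unfolding M_def G_def by auto
  obtain P where P: "\<forall>q\<in>set P. is_path E q \<and> length q = M \<and> set q \<subseteq> G"
    "\<forall>i j. i < length P \<and> j < length P \<and> i \<noteq> j \<longrightarrow> set (P ! i) \<inter> set (P ! j) = {}"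
    "card G \<le> length P * M + M * card (boundary E G)"
    using disjoint_paths_in_degree_2_set[OF gr ac M1 GV Gdeg] by blast
  have "real (nat \<lceil>1 / d\<rceil>) = of_int \<lceil>1 / d\<rceil>" using d0 by simp
  hence M: "real M \<le> 1 / d + 2" unfolding M_def by linarith
  have k: "0 \<le> 1 / d ^ 4" using d0 by simp
  have twoV: "2 \<le> card V" using two n by simp
  have "bare_path E q \<and> real (path_length q) \<ge> 1 / d" if q: "q \<in> set P" for q
  proof
    have "\<forall>v\<in>set q. degree E v = 2" using P(1) q unfolding G_def by blast
    thus "bare_path E q" using P(1) q unfolding bare_path_def by auto
    have "path_length q = nat \<lceil>1 / d\<rceil>" using P(1) q unfolding path_length_def M_def by simp
    thus "real (path_length q) \<ge> 1 / d" by linarith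
  qed
  moreover have "real (length P) \<ge> d * real n / 800"
  proof (rule many_paths_arith[OF d0 d1 _ _ p _ M])
    have "card (boundary E G) \<le> 10 * p"
      using tree_card_boundary_degree_2_le[OF T twoV] unfolding G_def p_def .
    hence "M * card (boundary E G) \<le> 10 * p * M" by (simp add: mult.commute)
    hence "card G \<le> length P * M + 10 * p * M" using P(3) by linarith
    hence "real (card G) \<le> real (length P) * real M + 10 * real p * real M"
      using of_nat_mono[where 'a = real] by fastforce
    moreover have "real n / 100 < (1 / d ^ 4 + 3) * real p + real (card G)"
      using notC tree_card_not_heavy_le[OF T twoV k] unfolding G_def p_def by linarith
    ultimately show "real n / 100 < real p / d ^ 4 + real (length P) * real M
        + 10 * real p * real M + 3 * real p" by (simp add: algebra_simps)
  qed simp_all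
  ultimately show ?paths using P(2) by blast
qed

theorem lemma3p5:
  shows "\<exists>C::real. C > 0 \<and>
    (\<forall>(\<delta>::real) (n::nat). 0 < \<delta> \<and> \<delta> \<le> 1 / C \<and> 0 < n \<and> 1 / real n \<le> \<delta> powr C / C \<longrightarrow>
      (\<forall>V E. is_tree V E \<and> card V = n \<longrightarrow>
         (\<exists>P::nat list list. real (length P) \<ge> \<delta> * real n / 800 \<and>
             (\<forall>p\<in>set P. bare_path E p \<and> real (path_length p) \<ge> 1 / \<delta>) \<and>
             (\<forall>i j. i < length P \<and> j < length P \<and> i \<noteq> j \<longrightarrow> set (P ! i) \<inter> set (P ! j) = {}))
       \<or> (\<exists>L. non_neighbouring_leaves V E L \<and> real (card L) \<ge> \<delta> ^ 6 * real n)
       \<or> real (card (V - heavy_leaves V E (1 / \<delta> ^ 4))) \<le> real n / 100))"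
proof (intro exI[of _ 100] conjI allI impI, goal_cases)
  case (2 d n V E)
  hence d: "0 < d" "d \<le> 1 / 100" and T: "is_tree V E" "card V = n" by auto
  have "d powr 100 \<le> 1" using d by (simp add: powr_realpow power_le_one)
  hence "1 / real n \<le> 1 / 100" using 2 by linarith
  hence "2 \<le> n" using 2 by (simp add: field_simps)
  thus ?case using tree_bare_paths_or_leaves_or_heavy[OF T _ d] by blast
qed simp

end
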